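(* Let $P=[0,1]$. For the online cumulative distance (CD) problem in $P$, no (possibly randomized) online algorithm achieves a competitive ratio to $OPT_C$ better than $\Omega(n)$, where $n$ is the number of points.
   Context: Distances are Euclidean; $\partial P=\{0,1\}$. An instance is $S=((s_1,d_1),\dots,(s_n,d_n))$ with $s_i<d_i$, $0=s_1\le\dots\le s_n$; point $i$ is present at time $t$ iff $s_i\le t\le d_i$; $T=\max_i d_i$. For locations $X\in P^n$, $d_{min}(t;X)=\min\{dis(X_i,\partial P),dis(X_i,X_j)\}$ over present points $i\ne j$ at time $t$, and $OPT_C(S;P)=\max_X\int_0^T d_{min}(t;X)\,dt$. In the online problem, upon arrival of each point the algorithm irrevocably chooses its location without knowing future events or $n$; the events are chosen by an adaptive adversary knowing the algorithm. The competitive ratio on $S$ is $OPT_C(S;P)/\int_0^T d_{min}(t;X)\,dt$ for the algorithm's output $X$. *)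

theory Defs
  imports "HOL-Analysis.Analysis"
begin

text \<open>An instance is a list of pairs (s_i, d_i) (0-based indices). Locations of
points are given by a function X :: nat => real (only indices < length S matter).
P = [0,1], boundary {0,1}.\<close>

type_synonym cd_instance = "(real \<times> real) list"

definition valid_instance :: "cd_instance \<Rightarrow> bool" where
  "valid_instance S \<longleftrightarrow> S \<noteq> [] \<and> fst (S ! 0) = 0 \<and> sorted (map fst S) \<and>
     (\<forall>i < length S. fst (S ! i) < snd (S ! i))"

definition present :: "cd_instance \<Rightarrow> nat \<Rightarrow> real \<Rightarrow> bool" where
  "present S i t \<longleftrightarrow> i < length S \<and> fst (S ! i) \<le> t \<and> t \<le> snd (S ! i)"

definition horizon :: "cd_instance \<Rightarrow> real" where
  "horizon S = Max (snd ` set S)"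

definition dist_bd :: "real \<Rightarrow> real" where
  "dist_bd x = min \<bar>x - 0\<bar> \<bar>x - 1\<bar>"

definition dmin :: "cd_instance \<Rightarrow> (nat \<Rightarrow> real) \<Rightarrow> real \<Rightarrow> real" where
  "dmin S X t =
    (let I = {i. present S i t} in
     if I = {} then 0
     else Min ((\<lambda>i. dist_bd (X i)) ` I \<union> {\<bar>X i - X j\<bar> | i j. i \<in> I \<and> j \<in> I \<and> i \<noteq> j}))"

definition cumulative :: "cd_instance \<Rightarrow> (nat \<Rightarrow> real) \<Rightarrow> real" where
  "cumulative S X = integral {0..horizon S} (dmin S X)"

definition OPT_C :: "cd_instance \<Rightarrow> real" where
  "OPT_C S = (SUP X \<in> {X. \<forall>i < length S. X i \<in> {0..1}}. cumulative S X)"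

text \<open>Information available to an online algorithm when point k (0-based) arrives:
the arrival times s_0..s_k and, for each earlier point j < k, its departure time
if it has departed by time s_k (d_j \<le> s_k), otherwise None.  The number n of
points is not part of this information.\<close>
type_synonym observation = "real list \<times> real option list"

definition obs :: "cd_instance \<Rightarrow> nat \<Rightarrow> observation" where
  "obs S k = (map fst (take (Suc k) S),
              map (\<lambda>j. if snd (S ! j) \<le> fst (S ! k) then Some (snd (S ! j)) else None) [0..<k])"

type_synonym online_alg = "observation \<Rightarrow> real"

definition online_alg :: "online_alg \<Rightarrow> bool" where
  "online_alg A \<longleftrightarrow> (\<forall>ob. A ob \<in> {0..1})"

text \<open>An adaptive adversary for n points: maps the algorithm's placements
(x_0,...,x_{n-1}) to an cd_instance, such that everything revealed to the algorithm at
the arrival of point k depends only on the placements x_0..x_{k-1}.\<close>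
definition adaptive_adversary :: "nat \<Rightarrow> (real list \<Rightarrow> cd_instance) \<Rightarrow> bool" where
  "adaptive_adversary n Adv \<longleftrightarrow>
     (\<forall>xs. length xs = n \<longrightarrow> length (Adv xs) = n \<and> valid_instance (Adv xs)) \<and>
     (\<forall>xs ys k. length xs = n \<longrightarrow> length ys = n \<longrightarrow> k < n \<longrightarrow>
        take k xs = take k ys \<longrightarrow> obs (Adv xs) k = obs (Adv ys) k)"

definition run :: "nat \<Rightarrow> online_alg \<Rightarrow> (real list \<Rightarrow> cd_instance) \<Rightarrow> real list \<Rightarrow> bool" where
  "run n A Adv xs \<longleftrightarrow> length xs = n \<and> (\<forall>k < n. xs ! k = A (obs (Adv xs) k))"

end

theory Submission
  imports Defs
begin

text \<open>All n points arrive at time 0 and nothing departs before the last one arrives, so the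
algorithm learns nothing about the instance while placing them. Afterwards the adversary keeps
alive, for a time span of length n, only the two placed points that lie closest together; by the
pigeonhole principle they are at distance O(1/n), so the algorithm collects O(1) in total. The
optimum places these two points at 1/3 and 2/3 and collects at least n/3.\<close>

definition dmin_values :: "cd_instance \<Rightarrow> (nat \<Rightarrow> real) \<Rightarrow> real \<Rightarrow> real set" where
  "dmin_values S X t =
     (let I = {i. present S i t} in
      (\<lambda>i. dist_bd (X i)) ` I \<union> {\<bar>X i - X j\<bar> | i j. i \<in> I \<and> j \<in> I \<and> i \<noteq> j})"

lemma finite_present: "finite {i. present S i t}"
  by (rule finite_subset[of _ "{..<length S}"]) (auto simp: present_def)

lemma finite_dmin_values: "finite (dmin_values S X t)"
proof -
  let ?I = "{i. present S i t}"
  have "{\<bar>X i - X j\<bar> | i j. i \<in> ?I \<and> j \<in> ?I \<and> i \<noteq> j} \<subseteq> (\<lambda>(i, j). \<bar>X i - X j\<bar>) ` (?I \<times> ?I)"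
    by auto
  moreover have "finite ((\<lambda>(i, j). \<bar>X i - X j\<bar>) ` (?I \<times> ?I))"
    using finite_present[of S t] by simp
  ultimately show ?thesis
    using finite_present[of S t] unfolding dmin_values_def Let_def
    by (meson finite_UnI finite_imageI finite_subset)
qed

lemma dmin_eq_Min:
  assumes "present S i t"
  shows "dmin S X t = Min (dmin_values S X t)"
  using assms by (auto simp: dmin_def dmin_values_def Let_def)

lemma dmin_le_dist_bd:
  assumes "present S i t"
  shows "dmin S X t \<le> dist_bd (X i)"
  unfolding dmin_eq_Min[OF assms]
  using assms by (intro Min_le finite_dmin_values) (auto simp: dmin_values_def)

lemma dmin_le_dist:
  assumes "present S i t" "present S j t" "i \<noteq> j"
  shows "dmin S X t \<le> \<bar>X i - X j\<bar>"
  unfolding dmin_eq_Min[OF assms(1)]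
  using assms by (intro Min_le finite_dmin_values) (auto simp: dmin_values_def)

lemma dist_bd_nonneg: "dist_bd x \<ge> 0"
  by (simp add: dist_bd_def)

lemma dist_bd_le_half: "x \<in> {0..1} \<Longrightarrow> dist_bd x \<le> 1/2"
  by (auto simp: dist_bd_def min_def)

lemma dmin_nonneg: "dmin S X t \<ge> 0"
proof (cases "\<exists>i. present S i t")
  case True
  then obtain i where i: "present S i t" by blast
  show ?thesis
    unfolding dmin_eq_Min[OF i]
    using i finite_dmin_values[of S X t]
    by (subst Min_ge_iff) (auto simp: dmin_values_def dist_bd_nonneg)
qed (simp add: dmin_def)

lemma dmin_le_half:
  assumes "\<forall>i < length S. X i \<in> {0..1}"
  shows "dmin S X t \<le> 1/2"
proof (cases "\<exists>i. present S i t")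
  case True
  then obtain i where i: "present S i t" by blast
  then have "X i \<in> {0..1}" using assms by (simp add: present_def)
  then show ?thesis using dmin_le_dist_bd[OF i, of X] dist_bd_le_half by fastforce
qed (simp add: dmin_def)

lemma dmin_two_present:
  assumes "{i. present S i t} = {a, b}" "a \<noteq> b"
  shows "dmin S X t = min (min (dist_bd (X a)) (dist_bd (X b))) \<bar>X a - X b\<bar>"
proof -
  have "present S a t" using assms(1) by blast
  moreover have "dmin_values S X t = {dist_bd (X a), dist_bd (X b), \<bar>X a - X b\<bar>}"
    using assms by (auto simp: dmin_values_def abs_minus_commute)
  ultimately show ?thesis by (simp add: dmin_eq_Min min.assoc)
qed

lemma cumulative_le_half_horizon:
  assumes "\<forall>i < length S. X i \<in> {0..1}"
  shows "cumulative S X \<le> max 0 (horizon S) / 2"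
proof (cases "dmin S X integrable_on {0..horizon S}")
  case True
  have "integral {0..horizon S} (dmin S X) \<le> integral {0..horizon S} (\<lambda>_. 1/2)"
    using True dmin_le_half[OF assms] by (intro integral_le) auto
  then show ?thesis by (auto simp: cumulative_def max_def split: if_splits)
qed (simp add: cumulative_def not_integrable_integral)

lemma cumulative_le_OPT_C:
  assumes "\<forall>i < length S. X i \<in> {0..1}"
  shows "cumulative S X \<le> OPT_C S"
  unfolding OPT_C_def
  using assms cumulative_le_half_horizon[of S]
  by (intro cSUP_upper bdd_aboveI2[where M = "max 0 (horizon S) / 2"]) auto

lemma exists_close_pair:
  fixes xs :: "real list"
  assumes "n \<ge> 3" "\<forall>k < n. xs ! k \<in> {0..1}"
  shows "\<exists>i j. i < n \<and> j < n \<and> i \<noteq> j \<and> \<bar>xs ! i - xs ! j\<bar> < 1 / (real n - 2)"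
proof -
  define m where "m = real n - 2"
  have m: "m \<ge> 1" using assms(1) by (simp add: m_def)
  define bucket where "bucket i = \<lfloor>xs ! i * m\<rfloor>" for i
  have buckets: "bucket ` {..<n} \<subseteq> {0..int n - 2}"
  proof
    fix y assume "y \<in> bucket ` {..<n}"
    then obtain i where i: "i < n" "y = bucket i" by auto
    have "0 \<le> xs ! i * m" "xs ! i * m \<le> m"
      using assms(2) i m by (auto intro: mult_left_le_one_le)
    then show "y \<in> {0..int n - 2}"
      unfolding i bucket_def m_def by (auto simp: le_floor_iff floor_le_iff)
  qed
  have "card (bucket ` {..<n}) \<le> card {0..int n - 2}"
    by (rule card_mono[OF _ buckets]) simp
  also have "\<dots> < card {..<n}"
    using assms(1) by simp
  finally have "\<not> inj_on bucket {..<n}"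
    using pigeonhole by blast
  then obtain i j where ij: "i < n" "j < n" "i \<noteq> j" "bucket i = bucket j"
    unfolding inj_on_def by auto
  have "\<bar>xs ! i * m - xs ! j * m\<bar> < 1"
    using ij(4) unfolding bucket_def abs_less_iff
    by (smt (verit) of_int_floor_le real_of_int_floor_add_one_gt)
  then have "\<bar>xs ! i - xs ! j\<bar> * m < 1"
    using m by (simp add: left_diff_distrib[symmetric] abs_mult)
  then have "\<bar>xs ! i - xs ! j\<bar> < 1 / m"
    using m by (simp add: field_simps)
  then show ?thesis using ij m_def by blast
qed

definition stay_instance :: "nat \<Rightarrow> nat set \<Rightarrow> real \<Rightarrow> cd_instance" where
  "stay_instance n K L = map (\<lambda>k. (0, if k \<in> K then 1 + L else 1)) [0..<n]"

lemma length_stay_instance [simp]: "length (stay_instance n K L) = n"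
  by (simp add: stay_instance_def)

lemma nth_stay_instance [simp]:
  "k < n \<Longrightarrow> stay_instance n K L ! k = (0, if k \<in> K then 1 + L else 1)"
  by (simp add: stay_instance_def)

lemma present_stay_instance:
  "present (stay_instance n K L) k t \<longleftrightarrow> k < n \<and> 0 \<le> t \<and> t \<le> (if k \<in> K then 1 + L else 1)"
  by (auto simp: present_def)

lemma valid_stay_instance:
  assumes "n > 0" "L \<ge> 0"
  shows "valid_instance (stay_instance n K L)"
proof -
  have "map fst (stay_instance n K L) = replicate n 0"
    by (intro nth_equalityI) auto
  then show ?thesis
    using assms by (auto simp: valid_instance_def sorted_replicate)
qed

lemma obs_stay_instance:
  assumes "k < n" "L \<ge> 0"
  shows "obs (stay_instance n K L) k = (replicate (Suc k) 0, replicate k None)"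
proof -
  have "map fst (take (Suc k) (stay_instance n K L)) = replicate (Suc k) 0"
    using assms(1) by (intro nth_equalityI) (auto simp: nth_Cons')
  moreover have "map (\<lambda>j. if snd (stay_instance n K L ! j) \<le> fst (stay_instance n K L ! k)
                         then Some (snd (stay_instance n K L ! j)) else None) [0..<k]
                 = replicate k None"
    using assms by (intro nth_equalityI) auto
  ultimately show ?thesis
    by (simp add: obs_def)
qed

lemma horizon_stay_instance:
  assumes "k \<in> K" "k < n" "L > 0"
  shows "horizon (stay_instance n K L) = 1 + L"
proof -
  have "snd ` set (stay_instance n K L) \<subseteq> {1, 1 + L}"
    by (auto simp: stay_instance_def)
  moreover have "1 + L \<in> snd ` set (stay_instance n K L)"
    using assms by (force simp: stay_instance_def)
  ultimately show ?thesis
    unfolding horizon_def using assms by (intro Max_eqI) (auto intro: finite_subset)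
qed

lemma dmin_cong_present:
  "{i. present S i t} = {i. present S i t'} \<Longrightarrow> dmin S X t = dmin S X t'"
  unfolding dmin_def by simp

lemma cumulative_stay_instance:
  assumes "k \<in> K" "k < n" "L > 0"
  defines "S \<equiv> stay_instance n K L"
  shows "cumulative S X = dmin S X 0 + L * dmin S X (1 + L)"
proof -
  have early: "(dmin S X has_integral dmin S X 0) {0..1::real}"
  proof (rule has_integral_eq[rotated])
    show "((\<lambda>_. dmin S X 0) has_integral dmin S X 0) {0..1::real}"
      using has_integral_const_real[of "dmin S X 0" "0::real" 1] by simp
    show "dmin S X 0 = dmin S X t" if "t \<in> {0..1}" for t
      using that assms(3) by (intro dmin_cong_present) (auto simp: S_def present_stay_instance)
  qed
  have late: "(dmin S X has_integral L * dmin S X (1 + L)) {1..1 + L}"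
  proof (rule has_integral_spike_finite[of "{1}"])
    show "((\<lambda>_. dmin S X (1 + L)) has_integral L * dmin S X (1 + L)) {1..1 + L}"
      using has_integral_const_real[of "dmin S X (1 + L)" 1 "1 + L"] assms(3)
      by (simp add: mult.commute)
    show "dmin S X t = dmin S X (1 + L)" if "t \<in> {1..1 + L} - {1}" for t
      using that assms(3) by (intro dmin_cong_present) (auto simp: S_def present_stay_instance)
  qed simp
  have "(dmin S X has_integral dmin S X 0 + L * dmin S X (1 + L)) {0..1 + L}"
    using has_integral_combine[OF _ _ early late] assms(3) by simp
  then show ?thesis
    unfolding cumulative_def S_def horizon_stay_instance[OF assms(1-3)]
    by (rule integral_unique)
qed

definition closest_pair :: "nat \<Rightarrow> real list \<Rightarrow> nat \<times> nat" where
  "closest_pair n xs = (SOME (i, j). i < n \<and> j < n \<and> i \<noteq> j \<and> \<bar>xs ! i - xs ! j\<bar> < 1 / (real n - 2))"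

text \<open>Since all departures lie after time 0, the observations do not depend on the placements,
which is why this adversary is admissible although it is defined from the complete play.\<close>

definition close_pair_adversary :: "nat \<Rightarrow> real list \<Rightarrow> cd_instance" where
  "close_pair_adversary n xs =
     stay_instance n {fst (closest_pair n xs), snd (closest_pair n xs)} (real n)"

lemma adaptive_close_pair_adversary:
  "n > 0 \<Longrightarrow> adaptive_adversary n (close_pair_adversary n)"
  unfolding adaptive_adversary_def close_pair_adversary_def
  by (auto simp: obs_stay_instance intro!: valid_stay_instance)

lemma closest_pair_close:
  assumes "n \<ge> 3" "\<forall>k < n. xs ! k \<in> {0..1}" "closest_pair n xs = (a, b)"
  shows "a < n" "b < n" "a \<noteq> b" "\<bar>xs ! a - xs ! b\<bar> < 1 / (real n - 2)"
proof -
  let ?close = "\<lambda>(i, j). i < n \<and> j < n \<and> i \<noteq> j \<and> \<bar>xs ! i - xs ! j\<bar> < 1 / (real n - 2)"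
  have "\<exists>p. ?close p"
    using exists_close_pair[OF assms(1,2)] by auto
  then have "?close (closest_pair n xs)"
    unfolding closest_pair_def by (rule someI_ex)
  then show "a < n" "b < n" "a \<noteq> b" "\<bar>xs ! a - xs ! b\<bar> < 1 / (real n - 2)"
    using assms(3) by auto
qed

lemma close_pair_adversary_ratio:
  fixes xs :: "real list"
  assumes n: "n \<ge> 4" and xs: "\<forall>k < n. xs ! k \<in> {0..1}"
  shows "OPT_C (close_pair_adversary n xs) \<ge> 1/8 * real n * cumulative (close_pair_adversary n xs) (\<lambda>i. xs ! i)"
proof -
  obtain a b where ab: "closest_pair n xs = (a, b)" by fastforce
  note pair = closest_pair_close[OF _ xs ab]
  define S where "S = stay_instance n {a, b} (real n)"
  have adv: "close_pair_adversary n xs = S"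
    by (simp add: close_pair_adversary_def S_def ab)
  have cum: "cumulative S X = dmin S X 0 + real n * dmin S X (1 + real n)" for X
    unfolding S_def using pair n by (intro cumulative_stay_instance[of a]) auto
  have survivors: "{i. present S i (1 + real n)} = {a, b}"
    using pair n by (auto simp: S_def present_stay_instance)
  have "dmin S (\<lambda>i. xs ! i) (1 + real n) < 1 / (real n - 2)"
    using pair n survivors dmin_le_dist[of S a "1 + real n" b "\<lambda>i. xs ! i"] by fastforce
  also have "\<dots> \<le> 2 / real n"
    using n by (simp add: field_simps)
  finally have "real n * dmin S (\<lambda>i. xs ! i) (1 + real n) \<le> 2"
    using n by (simp add: field_simps)
  moreover have "dmin S (\<lambda>i. xs ! i) 0 \<le> 1/2"
    using xs by (intro dmin_le_half) (simp add: S_def)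
  ultimately have alg: "cumulative S (\<lambda>i. xs ! i) \<le> 5/2"
    using cum by simp
  define Y where "Y i = (if i = a then 1/3 else if i = b then 2/3 else 0 :: real)" for i
  have Y_feasible: "\<forall>i < length S. Y i \<in> {0..1}"
    by (simp add: Y_def)
  have "dmin S Y (1 + real n) = 1/3"
    using pair n by (simp add: dmin_two_present[OF survivors] Y_def dist_bd_def)
  then have "cumulative S Y = dmin S Y 0 + real n / 3"
    using cum[of Y] by simp
  then have "real n / 3 \<le> cumulative S Y"
    using dmin_nonneg[of S Y 0] by linarith
  also have "\<dots> \<le> OPT_C S"
    by (rule cumulative_le_OPT_C[OF Y_feasible])
  finally have opt: "real n / 3 \<le> OPT_C S" .
  have "1/8 * real n * cumulative S (\<lambda>i. xs ! i) \<le> 1/8 * real n * (5/2)"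
    using alg by (intro mult_left_mono) auto
  then show ?thesis
    using opt adv by simp
qed

lemma run_in_unit_interval:
  assumes "online_alg A" "run n A Adv xs"
  shows "\<forall>k < n. xs ! k \<in> {0..1}"
proof (intro allI impI)
  fix k assume "k < n"
  then have "xs ! k = A (obs (Adv xs) k)"
    using assms(2) by (simp add: run_def)
  then show "xs ! k \<in> {0..1}"
    using assms(1) by (simp only: online_alg_def)
qed

theorem claim1:
  shows "\<exists>c > 0. \<exists>N. \<forall>n \<ge> N. \<forall>\<A> :: online_alg set. \<A> \<noteq> {} \<longrightarrow> (\<forall>A \<in> \<A>. online_alg A) \<longrightarrow>
           (\<exists>Adv. adaptive_adversary n Adv \<and>
              (\<forall>A \<in> \<A>. \<forall>xs. run n A Adv xs \<longrightarrow>
                 OPT_C (Adv xs) \<ge> c * real n * cumulative (Adv xs) (\<lambda>i. xs ! i)))"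
proof (intro exI[of _ "1/8"] conjI exI[of _ "4::nat"] allI impI)
  fix n :: nat and \<A> :: "online_alg set"
  assume n: "n \<ge> 4" and algs: "\<forall>A \<in> \<A>. online_alg A"
  show "\<exists>Adv. adaptive_adversary n Adv \<and>
          (\<forall>A \<in> \<A>. \<forall>xs. run n A Adv xs \<longrightarrow>
             OPT_C (Adv xs) \<ge> 1/8 * real n * cumulative (Adv xs) (\<lambda>i. xs ! i))"
  proof (intro exI[of _ "close_pair_adversary n"] conjI ballI allI impI)
    show "adaptive_adversary n (close_pair_adversary n)"
      using n by (intro adaptive_close_pair_adversary) simp
    fix A xs assume "A \<in> \<A>" "run n A (close_pair_adversary n) xs"
    then show "OPT_C (close_pair_adversary n xs) \<ge>
                 1/8 * real n * cumulative (close_pair_adversary n xs) (\<lambda>i. xs ! i)"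
      using algs n by (intro close_pair_adversary_ratio run_in_unit_interval) auto
  qed
qed simp

end
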